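(* Let $\Omega_n=\dfrac{\pi^{n/2}}{\Gamma\left(\frac n2+1\right)}$ for $n\in\mathbb{N}_0$. Let $c_0=1$ and, for $j\in\mathbb{N}$, \[ c_j=\frac1j\sum_{k=1}^j(-1)^k\left[B_{k+1}\left(\tfrac12\right)-B_{k+1}(1)\right]\frac{2^k}{k+1}c_{j-k}, \] where $B_m(x)$ are the Bernoulli polynomials. As $n\to\infty$, the following asymptotic formula holds: \[ \frac{\Omega_{n-1}}{\Omega_n}=\sqrt{\frac{n+\frac12}{2\pi}+\sum_{j=1}^\infty\frac{s_j}{n^j}},\qquad s_j=\frac1{2\pi}\sum_{k=0}^{j+1}c_kc_{j+1-k}\quad(j\in\mathbb{N}). \]
   Context: $\Omega_n$ is the volume of the unit ball in $\mathbb{R}^n$; $\Gamma$ is Euler's gamma function. The Bernoulli polynomials are defined by $\frac{te^{xt}}{e^t-1}=\sum_{m\ge0}B_m(x)\frac{t^m}{m!}$. The formula is an asymptotic expansion: for every $N$, $\left(\frac{\Omega_{n-1}}{\Omega_n}\right)^2-\frac{n+1/2}{2\pi}-\sum_{j=1}^Ns_jn^{-j}=O(n^{-N-1})$ as $n\to\infty$. *)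

theory Defs
  imports "HOL-Analysis.Analysis" "HOL-Computational_Algebra.Formal_Power_Series"
    "HOL-Library.Landau_Symbols"
begin

definition Omega :: "nat \<Rightarrow> real" where
  "Omega n = pi powr (real n / 2) / Gamma (real n / 2 + 1)"

definition bernpoly :: "nat \<Rightarrow> real \<Rightarrow> real" where
  "bernpoly m x = fact m * fps_nth ((fps_X * fps_exp x) / (fps_exp 1 - 1)) m"

fun cc :: "nat \<Rightarrow> real" where
  "cc 0 = 1"
| "cc (Suc j) = (1 / real (Suc j)) *
     (\<Sum>k = 1..Suc j. (-1) ^ k * (bernpoly (k + 1) (1/2) - bernpoly (k + 1) 1)
        * 2 ^ k / real (k + 1) * cc (Suc j - k))"

definition ss :: "nat \<Rightarrow> real" where
  "ss j = (1 / (2 * pi)) * (\<Sum>k = 0..j + 1. cc k * cc (j + 1 - k))"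

end

theory Submission
  imports Defs "HOL-Computational_Algebra.Polynomial_FPS"
begin

text \<open>
  Write A n = Omega (n - 1) / Omega n. The recursion of Gamma gives
  A n * A (n + 1) = (n + 1) / (2 pi), and log-convexity of Gamma squeezes A n ^ 2 between
  n / (2 pi) and (n + 1) / (2 pi).

  Let C(x) = sum c_j x^j and T = C^2, so that the coefficient of x^(j+1) in T is 2 pi s_j.
  The recursion for the c_j says C' = B C for a series B built from the Bernoulli values,
  and the generating function identity
  sum (B_m(1/2) - B_m(1)) t^m / m! = - t e^(t/2) / (1 + e^(t/2))
  turns into 2 (B(x) + B(x/(1+x)) / (1+x)^2) = 1/(1+x). Hence T satisfies the
  functional equation T(x) T(x/(1+x)) = 1 + x, which mirrors the product relation for A.

  With P n = n / (2 pi) T_M(1/n) for the partial sum T_M of degree M, the functional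
  equation gives P n * P (n + 1) = ((n + 1) / (2 pi))^2 (1 + O(n^-(M+1))), so
  lambda n = ln (A n ^ 2 / P n) tends to 0 and lambda n + lambda (n + 1) = O(n^-(M+1)).
  Telescoping over steps of two yields lambda n = O(n^-M), hence A n ^ 2 = P n + O(n^(1-M)),
  and P n is exactly the claimed expansion up to one more term.
\<close>

unbundle no vec_syntax
notation fps_nth (infixl \<open>$\<close> 75)

section \<open>Bernoulli polynomials at 1/2 and at 1\<close>

definition bernoulli_gf :: "real \<Rightarrow> real fps" where
  "bernoulli_gf x = fps_X * fps_exp x / (fps_exp 1 - 1)"

lemma bernpoly_conv_bernoulli_gf: "bernpoly n x = fact n * bernoulli_gf x $ n"
  by (simp add: bernpoly_def bernoulli_gf_def)

lemma fps_exp_one_minus_one_nonzero: "fps_exp (1::real) - 1 \<noteq> 0"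
proof
  assume "fps_exp (1::real) - 1 = 0"
  then have "(fps_exp (1::real) - 1) $ 1 = 0" by simp
  then show False by simp
qed

lemma bernoulli_gf_mult: "bernoulli_gf x * (fps_exp 1 - 1) = fps_X * fps_exp x"
  unfolding bernoulli_gf_def
proof (rule fps_times_divide_eq[OF fps_exp_one_minus_one_nonzero])
  have "subdegree (fps_exp (1::real) - 1) \<le> 1"
    by (rule subdegree_leI) auto
  moreover have "subdegree (fps_X * fps_exp x :: real fps) = 1"
    by (rule subdegreeI) auto
  ultimately show "subdegree (fps_exp 1 - 1 :: real fps) \<le> subdegree (fps_X * fps_exp x :: real fps)"
    by linarith
qed

definition bernoulli_gap_gf :: "real fps" where
  "bernoulli_gap_gf = bernoulli_gf (1/2) - bernoulli_gf 1"

lemma bernoulli_gap_gf_eq: "(1 + fps_exp (1/2)) * bernoulli_gap_gf = - (fps_X * fps_exp (1/2))"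
proof -
  let ?h = "fps_exp (1/2::real)"
  have exp_one: "fps_exp (1::real) = ?h * ?h"
    using fps_exp_add_mult[of "1/2::real" "1/2"] by simp
  have "(1 + ?h) * bernoulli_gap_gf * (fps_exp 1 - 1) = (1 + ?h) * (fps_X * ?h - fps_X * fps_exp 1)"
    unfolding bernoulli_gap_gf_def by (simp add: algebra_simps bernoulli_gf_mult[symmetric])
  also have "\<dots> = - (fps_X * ?h) * (fps_exp 1 - 1)"
    unfolding exp_one by (simp add: algebra_simps)
  finally show ?thesis
    using fps_exp_one_minus_one_nonzero by (metis mult_right_cancel)
qed

lemma bernoulli_gap_gf_nth_0: "bernoulli_gap_gf $ 0 = 0"
  and bernoulli_gap_gf_nth_1: "bernoulli_gap_gf $ 1 = - 1/2"
proof -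
  have "((1 + fps_exp (1/2)) * bernoulli_gap_gf) $ k = (- (fps_X * fps_exp (1/2::real))) $ k" for k
    by (simp only: bernoulli_gap_gf_eq)
  from this[of 0] this[of 1] show "bernoulli_gap_gf $ 0 = 0" "bernoulli_gap_gf $ 1 = - 1/2"
    by (simp_all add: fps_mult_nth)
qed

lemma bernoulli_gap_gf_convolution:
  "bernoulli_gap_gf $ (m + 2) + (\<Sum>q\<le>m. fps_exp (1/2) $ (m - q) * bernoulli_gap_gf $ (q + 2))
     = - (fps_exp (1/2) $ (m + 1)) / 2"
proof -
  let ?h = "fps_exp (1/2::real)" and ?Q = bernoulli_gap_gf
  have "((1 + ?h) * ?Q) $ (m + 2) = ?Q $ (m + 2) + (\<Sum>i = 0..m + 2. ?h $ i * ?Q $ (m + 2 - i))"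
    by (simp add: distrib_right fps_mult_nth)
  also have "(\<Sum>i = 0..m + 2. ?h $ i * ?Q $ (m + 2 - i))
      = (\<Sum>i = 0..m. ?h $ i * ?Q $ (m + 2 - i)) - ?h $ (m + 1) / 2"
    by (simp add: numeral_2_eq_2 bernoulli_gap_gf_nth_0 bernoulli_gap_gf_nth_1[unfolded One_nat_def]
        algebra_simps)
  also have "(\<Sum>i = 0..m. ?h $ i * ?Q $ (m + 2 - i)) = (\<Sum>q\<le>m. ?h $ (m - q) * ?Q $ (q + 2))"
    by (subst sum.atLeastAtMost_rev[of _ 0 m, simplified])
       (simp add: atLeast0AtMost Suc_diff_le)
  finally have "((1 + ?h) * ?Q) $ (m + 2)
      = ?Q $ (m + 2) + (\<Sum>q\<le>m. ?h $ (m - q) * ?Q $ (q + 2)) - ?h $ (m + 1) / 2"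
    by simp
  moreover have "((1 + ?h) * ?Q) $ (m + 2) = - (?h $ (m + 1))"
    by (simp add: bernoulli_gap_gf_eq del: fps_exp_nth)
  ultimately show ?thesis by linarith
qed

definition cc_weight :: "nat \<Rightarrow> real" where
  "cc_weight k = (-1) ^ k * (bernpoly (k + 1) (1/2) - bernpoly (k + 1) 1) * 2 ^ k / real (k + 1)"

lemma cc_weight_conv_bernoulli_gap_gf:
  "cc_weight k = (-1) ^ k * fact k * 2 ^ k * bernoulli_gap_gf $ (k + 1)"
proof -
  have "bernpoly (k + 1) (1/2) - bernpoly (k + 1) 1 = real (k + 1) * fact k * bernoulli_gap_gf $ (k + 1)"
    by (simp add: bernpoly_conv_bernoulli_gf bernoulli_gap_gf_def algebra_simps)
  then show ?thesis
    unfolding cc_weight_def by (simp add: field_simps)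
qed

lemma gbinomial_minus_of_nat_Suc:
  "((- of_nat (Suc k)) gchoose j :: real) = (-1) ^ j * real ((k + j) choose j)"
proof -
  have "((- of_nat (Suc k)) gchoose j :: real) = (-1) ^ j * (of_nat (k + j) gchoose j)"
    by (subst gbinomial_negated_upper) (simp add: algebra_simps)
  then show ?thesis by (simp add: binomial_gbinomial)
qed

lemma cc_weight_mult_gbinomial:
  assumes "q \<le> m"
  shows "cc_weight (q + 1) * ((- of_nat (q + 2)) gchoose (m - q))
       = (-1) ^ (m + 1) * fact (m + 1) * 2 ^ (m + 1)
         * (fps_exp (1/2) $ (m - q) * bernoulli_gap_gf $ (q + 2))"
proof -
  have "fact (m - q) * fact (q + 1) * ((m + 1) choose (m - q)) = (fact (m + 1) :: nat)"
    using binomial_fact_lemma[of "m - q" "m + 1"] assms by (simp add: Suc_diff_le)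
  then have "fact (m - q) * fact (q + 1) * real ((m + 1) choose (m - q)) = fact (m + 1)"
    by (metis of_nat_fact of_nat_mult)
  then have facts: "fact (q + 1) * real ((m + 1) choose (m - q)) = fact (m + 1) / fact (m - q)"
    by (simp add: field_simps)
  have signs: "(-1::real) ^ (q + 1) * (-1) ^ (m - q) = (-1) ^ (m + 1)"
    using assms by (simp flip: power_add)
  have "(2::real) ^ (m + 1) = 2 ^ (q + 1) * 2 ^ (m - q)"
    using assms by (simp flip: power_add)
  then have twos: "(2::real) ^ (q + 1) = 2 ^ (m + 1) * (1/2) ^ (m - q)"
    by (simp add: power_one_over)
  have binom: "((- of_nat (q + 2)) gchoose (m - q) :: real) = (-1) ^ (m - q) * real ((m + 1) choose (m - q))"
    using gbinomial_minus_of_nat_Suc[of "q + 1" "m - q"] assms by simp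
  have "cc_weight (q + 1) * ((- of_nat (q + 2)) gchoose (m - q))
      = ((-1) ^ (q + 1) * (-1) ^ (m - q)) * (fact (q + 1) * real ((m + 1) choose (m - q)))
        * 2 ^ (q + 1) * bernoulli_gap_gf $ (q + 2)"
    unfolding cc_weight_conv_bernoulli_gap_gf binom by (simp add: mult_ac)
  also have "\<dots> = (-1) ^ (m + 1) * fact (m + 1) * 2 ^ (m + 1)
         * ((1/2) ^ (m - q) / fact (m - q) * bernoulli_gap_gf $ (q + 2))"
    unfolding signs facts twos by (simp add: mult_ac)
  finally show ?thesis by simp
qed

lemma cc_weight_convolution:
  "2 * cc_weight (m + 1) + 2 * (\<Sum>q\<le>m. cc_weight (q + 1) * ((- of_nat (q + 2)) gchoose (m - q)))
     = (-1) ^ m"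
proof -
  define c :: real where "c = (-1) ^ (m + 1) * fact (m + 1) * 2 ^ (m + 1)"
  have "(\<Sum>q\<le>m. cc_weight (q + 1) * ((- of_nat (q + 2)) gchoose (m - q)))
      = c * (\<Sum>q\<le>m. fps_exp (1/2) $ (m - q) * bernoulli_gap_gf $ (q + 2))"
    unfolding sum_distrib_left c_def
    by (rule sum.cong) (simp_all only: cc_weight_mult_gbinomial atMost_iff)
  moreover have "cc_weight (m + 1) = c * bernoulli_gap_gf $ (m + 2)"
    unfolding c_def cc_weight_conv_bernoulli_gap_gf by (simp add: numeral_2_eq_2)
  ultimately have "2 * cc_weight (m + 1)
        + 2 * (\<Sum>q\<le>m. cc_weight (q + 1) * ((- of_nat (q + 2)) gchoose (m - q)))
      = 2 * c * (bernoulli_gap_gf $ (m + 2)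
          + (\<Sum>q\<le>m. fps_exp (1/2) $ (m - q) * bernoulli_gap_gf $ (q + 2)))"
    by (simp only: distrib_left mult.assoc)
  also have "\<dots> = - c * (fps_exp (1/2) $ (m + 1))"
    unfolding bernoulli_gap_gf_convolution by (simp del: fps_exp_nth)
  also have "\<dots> = (-1) ^ m"
    unfolding c_def by (simp add: power_one_over del: fact_Suc)
  finally show ?thesis .
qed

section \<open>Composition with x/(1+x)\<close>

lemma one_plus_fps_X_power_mult_fps_binomial:
  "(1 + fps_X) ^ k * fps_binomial (- of_nat k) = (1 :: 'a::field_char_0 fps)"
  by (simp flip: fps_binomial_of_nat fps_binomial_add_mult)

(* The series of x/(1+x); substituting x = 1/n turns it into 1/(n+1). *)
definition recip_succ_fps :: "real fps" where
  "recip_succ_fps = fps_X * fps_binomial (-1)"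

lemma recip_succ_fps_nth_0: "recip_succ_fps $ 0 = 0"
  by (simp add: recip_succ_fps_def)

lemma recip_succ_fps_power: "recip_succ_fps ^ q = fps_X ^ q * fps_binomial (- of_nat q)"
  by (simp add: recip_succ_fps_def power_mult_distrib fps_binomial_power)

lemma fps_deriv_recip_succ_fps: "fps_deriv recip_succ_fps = fps_binomial (-2)"
proof -
  have "(1 + fps_X) * fps_binomial (-1) = (1 :: real fps)"
    using one_plus_fps_X_power_mult_fps_binomial[of 1] by simp
  then have "recip_succ_fps = 1 - fps_binomial (-1)"
    unfolding recip_succ_fps_def by (simp add: algebra_simps)
  then have "fps_deriv recip_succ_fps = fps_deriv (1 - fps_binomial (-1))"
    by (rule arg_cong)
  also have "\<dots> = - fps_deriv (fps_binomial (-1))"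
    by simp
  also have "\<dots> = - (fps_const (-1) * fps_binomial (-1) / (1 + fps_X))"
    by (simp only: fps_binomial_deriv)
  also have "\<dots> = fps_binomial (-1) * fps_binomial (-1)"
    by (simp add: fps_divide_unit fps_binomial_minus_one fps_const_neg[symmetric] del: fps_const_neg)
  also have "\<dots> = fps_binomial (-2)"
    by (simp flip: fps_binomial_add_mult)
  finally show ?thesis .
qed

lemma fps_compose_nth_eq_partial_sum:
  fixes a b :: "'a::comm_ring_1 fps"
  assumes "b $ 0 = 0" and "i \<le> m"
  shows "(a oo b) $ i = (\<Sum>q\<le>m. fps_const (a $ q) * b ^ q) $ i"
proof -
  have "(a oo b) $ i = (\<Sum>q = 0..i. a $ q * (b ^ q $ i))"
    by (rule fps_compose_nth)
  also have "\<dots> = (\<Sum>q\<le>m. a $ q * (b ^ q $ i))"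
    using assms startsby_zero_power_prefix[OF assms(1)]
    by (intro sum.mono_neutral_left) auto
  finally show ?thesis by (simp add: fps_sum_nth)
qed

lemma fps_mult_nth_cong:
  assumes "\<And>i. i \<le> m \<Longrightarrow> f $ i = g $ i"
  shows "(f * h) $ m = (g * h) $ m"
  unfolding fps_mult_nth using assms by (intro sum.cong) auto

lemma fps_compose_mult_nth:
  fixes a b h :: "'a::comm_ring_1 fps"
  assumes "b $ 0 = 0"
  shows "((a oo b) * h) $ m = (\<Sum>q\<le>m. a $ q * (b ^ q * h) $ m)"
proof -
  have "((a oo b) * h) $ m = ((\<Sum>q\<le>m. fps_const (a $ q) * b ^ q) * h) $ m"
    by (rule fps_mult_nth_cong) (rule fps_compose_nth_eq_partial_sum[OF assms])
  then show ?thesis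
    by (simp add: sum_distrib_right fps_sum_nth mult.assoc)
qed

section \<open>The functional equation T(x) T(x/(1+x)) = 1 + x\<close>

definition cc_fps :: "real fps" where
  "cc_fps = Abs_fps cc"

definition cc_weight_fps :: "real fps" where
  "cc_weight_fps = Abs_fps (\<lambda>k. cc_weight (k + 1))"

lemma fps_deriv_cc_fps: "fps_deriv cc_fps = cc_weight_fps * cc_fps"
proof (rule fps_ext)
  fix j
  have "real (Suc j) * cc (Suc j) = (\<Sum>k = 1..Suc j. cc_weight k * cc (Suc j - k))"
    by (simp add: cc_weight_def)
  also have "\<dots> = (\<Sum>i = 0..j. cc_weight (Suc i) * cc (j - i))"
    unfolding One_nat_def sum.shift_bounds_cl_Suc_ivl by simp
  finally show "fps_deriv cc_fps $ j = (cc_weight_fps * cc_fps) $ j"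
    by (simp add: cc_fps_def cc_weight_fps_def fps_mult_nth)
qed

(* Since C' = B C for C = cc_fps and B = cc_weight_fps, this says that the logarithmic
   derivative of C(x)^2 C(x/(1+x))^2 is 1/(1+x). *)
lemma cc_weight_fps_functional_eq:
  "2 * (cc_weight_fps + (cc_weight_fps oo recip_succ_fps) * fps_binomial (-2)) = fps_binomial (-1)"
proof (rule fps_ext)
  fix m
  have "((cc_weight_fps oo recip_succ_fps) * fps_binomial (-2)) $ m
      = (\<Sum>q\<le>m. cc_weight (q + 1) * (recip_succ_fps ^ q * fps_binomial (-2)) $ m)"
    by (simp add: fps_compose_mult_nth recip_succ_fps_nth_0 cc_weight_fps_def)
  also have "\<dots> = (\<Sum>q\<le>m. cc_weight (q + 1) * ((- of_nat (q + 2)) gchoose (m - q)))"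
  proof (rule sum.cong)
    fix q assume "q \<in> {..m}"
    have "recip_succ_fps ^ q * fps_binomial (-2) = fps_X ^ q * fps_binomial (- of_nat (q + 2))"
      by (simp add: recip_succ_fps_power mult.assoc algebra_simps flip: fps_binomial_add_mult)
    then show "cc_weight (q + 1) * (recip_succ_fps ^ q * fps_binomial (-2)) $ m
        = cc_weight (q + 1) * ((- of_nat (q + 2)) gchoose (m - q))"
      using \<open>q \<in> {..m}\<close> by (simp add: fps_X_power_mult_nth)
  qed simp
  finally show "(2 * (cc_weight_fps + (cc_weight_fps oo recip_succ_fps) * fps_binomial (-2))) $ m
      = fps_binomial (-1) $ m"
    using cc_weight_convolution[of m]
    by (simp add: cc_weight_fps_def gbinomial_minus_of_nat_Suc[of 0, simplified])
qed

definition sigma_fps :: "real fps" where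
  "sigma_fps = cc_fps ^ 2"

lemma sigma_fps_functional_eq: "sigma_fps * (sigma_fps oo recip_succ_fps) = 1 + fps_X"
proof -
  let ?W = cc_weight_fps and ?R = recip_succ_fps
  define V where "V = sigma_fps * (sigma_fps oo ?R)"
  have dT: "fps_deriv sigma_fps = 2 * ?W * sigma_fps"
    by (simp add: sigma_fps_def power2_eq_square fps_deriv_cc_fps algebra_simps)
  have "fps_deriv V = V * (2 * (?W + (?W oo ?R) * fps_binomial (-2)))"
    unfolding V_def
    by (simp add: fps_compose_deriv[OF recip_succ_fps_nth_0] fps_deriv_recip_succ_fps dT
        fps_compose_mult_distrib[OF recip_succ_fps_nth_0] algebra_simps)
  also have "\<dots> = fps_const 1 * V / (1 + fps_X)"
    unfolding cc_weight_fps_functional_eq by (simp add: fps_binomial_minus_one fps_divide_unit)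
  finally have "V = fps_const (V $ 0) * fps_binomial 1"
    using fps_binomial_ODE_unique by blast
  moreover have "V $ 0 = 1"
    by (simp add: V_def sigma_fps_def cc_fps_def power2_eq_square)
  ultimately show ?thesis
    by (simp add: V_def fps_binomial_1)
qed

lemma sigma_fps_nth_0: "sigma_fps $ 0 = 1"
  by (simp add: sigma_fps_def cc_fps_def power2_eq_square)

lemma sigma_fps_nth_1: "sigma_fps $ 1 = 1/2"
proof -
  have "(sigma_fps * (sigma_fps oo recip_succ_fps)) $ 1 = (1 + fps_X :: real fps) $ 1"
    by (simp only: sigma_fps_functional_eq)
  moreover have "(sigma_fps oo recip_succ_fps) $ 1 = sigma_fps $ 1"
    by (simp add: fps_compose_nth recip_succ_fps_def)
  ultimately show ?thesis
    by (simp add: fps_mult_nth sigma_fps_nth_0)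
qed

lemma ss_conv_sigma_fps: "ss j = sigma_fps $ Suc j / (2 * pi)"
  by (simp add: ss_def sigma_fps_def cc_fps_def power2_eq_square fps_mult_nth)

section \<open>Partial sums\<close>

definition fps_partial_sum :: "'a::comm_ring_1 fps \<Rightarrow> nat \<Rightarrow> 'a \<Rightarrow> 'a" where
  "fps_partial_sum F M x = (\<Sum>p\<le>M. F $ p * x ^ p)"

lemma fps_of_poly_one_plus_X: "fps_of_poly [:1, 1:] = (1 + fps_X :: 'a::field fps)"
  using fps_of_poly_linear'[of "1::'a"] by simp

lemma fps_of_poly_partial_sum_reflected:
  fixes F :: "real fps"
  shows "fps_of_poly (\<Sum>j\<le>M. monom (F $ j) j * [:1, 1:] ^ (M - j))
           = (1 + fps_X) ^ M * (\<Sum>j\<le>M. fps_const (F $ j) * recip_succ_fps ^ j)"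
  unfolding fps_of_poly_sum sum_distrib_left
proof (rule sum.cong)
  fix j assume "j \<in> {..M}"
  then have "(1 + fps_X) ^ M * fps_binomial (- of_nat j)
      = (1 + fps_X) ^ (M - j) * ((1 + fps_X) ^ j * fps_binomial (- of_nat j) :: real fps)"
    by (simp add: mult.assoc flip: power_add)
  then have pow: "(1 + fps_X) ^ M * fps_binomial (- of_nat j) = (1 + fps_X :: real fps) ^ (M - j)"
    by (simp only: one_plus_fps_X_power_mult_fps_binomial mult_1_right)
  have "fps_of_poly (monom (F $ j) j * [:1, 1:] ^ (M - j))
      = fps_const (F $ j) * fps_X ^ j * (1 + fps_X) ^ (M - j)"
    by (simp add: fps_of_poly_monom fps_of_poly_mult fps_of_poly_power fps_of_poly_one_plus_X)
  also have "\<dots> = fps_const (F $ j) * fps_X ^ j * ((1 + fps_X) ^ M * fps_binomial (- of_nat j))"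
    by (simp only: pow)
  also have "\<dots> = (1 + fps_X) ^ M * (fps_const (F $ j) * recip_succ_fps ^ j)"
    by (simp only: recip_succ_fps_power mult_ac)
  finally show "fps_of_poly (monom (F $ j) j * [:1, 1:] ^ (M - j))
      = (1 + fps_X) ^ M * (fps_const (F $ j) * recip_succ_fps ^ j)" .
qed simp

lemma poly_partial_sum_reflected:
  fixes F :: "real fps" and x :: real
  assumes "x \<ge> 0"
  shows "poly (\<Sum>j\<le>M. monom (F $ j) j * [:1, 1:] ^ (M - j)) x
           = (1 + x) ^ M * fps_partial_sum F M (x / (1 + x))"
proof -
  have "poly (monom (F $ j) j * [:1, 1:] ^ (M - j)) x = (1 + x) ^ M * (F $ j * (x / (1 + x)) ^ j)"
    if "j \<le> M" for j
  proof -
    have "(1 + x) ^ M = (1 + x) ^ (M - j) * (1 + x) ^ j"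
      using that by (simp flip: power_add)
    then show ?thesis
      using assms by (simp add: poly_monom power_divide field_simps)
  qed
  then show ?thesis
    unfolding fps_partial_sum_def poly_sum sum_distrib_left by (intro sum.cong) auto
qed

lemma partial_sum_product_low_coeffs:
  fixes F :: "real fps" and M :: nat
  defines "p \<equiv> (\<Sum>j\<le>M. monom (F $ j) j)"
    and "q \<equiv> (\<Sum>j\<le>M. monom (F $ j) j * [:1, 1:] ^ (M - j))"
  assumes F: "F * (F oo recip_succ_fps) = 1 + fps_X" and "i \<le> M"
  shows "coeff (p * q) i = coeff ([:1, 1:] ^ (M + 1)) i"
proof -
  let ?S = "\<Sum>j\<le>M. fps_const (F $ j) * recip_succ_fps ^ j"
  have p_nth: "coeff p k = F $ k" if "k \<le> M" for k
    using that unfolding p_def by (simp add: coeff_sum coeff_monom)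
  have "coeff (p * q) i = (fps_of_poly p * fps_of_poly q) $ i"
    by (simp only: fps_of_poly_mult[symmetric] fps_of_poly_nth)
  also have "\<dots> = (F * fps_of_poly q) $ i"
    using \<open>i \<le> M\<close> by (intro fps_mult_nth_cong) (simp add: p_nth)
  also have "\<dots> = (?S * (F * (1 + fps_X) ^ M)) $ i"
    unfolding q_def fps_of_poly_partial_sum_reflected by (simp only: mult_ac)
  also have "\<dots> = ((F oo recip_succ_fps) * (F * (1 + fps_X) ^ M)) $ i"
    using \<open>i \<le> M\<close>
    by (intro fps_mult_nth_cong fps_compose_nth_eq_partial_sum[symmetric] recip_succ_fps_nth_0) auto
  also have "\<dots> = ((F * (F oo recip_succ_fps)) * (1 + fps_X) ^ M) $ i"
    by (simp only: mult_ac)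
  also have "\<dots> = ((1 + fps_X) ^ (M + 1)) $ i"
    by (simp only: F power_Suc Suc_eq_plus1[symmetric])
  also have "\<dots> = coeff ([:1, 1:] ^ (M + 1)) i"
    by (simp only: fps_of_poly_nth[symmetric] fps_of_poly_power fps_of_poly_one_plus_X)
  finally show ?thesis .
qed

lemma abs_poly_le_if_low_coeffs_zero:
  fixes p :: "real poly"
  assumes "\<And>i. i \<le> M \<Longrightarrow> coeff p i = 0" and "0 \<le> x" "x \<le> 1"
  shows "\<bar>poly p x\<bar> \<le> (\<Sum>i\<le>degree p. \<bar>coeff p i\<bar>) * x ^ (M + 1)"
proof -
  have "\<bar>poly p x\<bar> \<le> (\<Sum>i\<le>degree p. \<bar>coeff p i * x ^ i\<bar>)"
    unfolding poly_altdef by (rule sum_abs)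
  also have "\<dots> \<le> (\<Sum>i\<le>degree p. \<bar>coeff p i\<bar> * x ^ (M + 1))"
  proof (rule sum_mono)
    fix i
    show "\<bar>coeff p i * x ^ i\<bar> \<le> \<bar>coeff p i\<bar> * x ^ (M + 1)"
    proof (cases "i \<le> M")
      case False
      then have "x ^ i \<le> x ^ (M + 1)"
        using assms by (intro power_decreasing) auto
      then show ?thesis
        using assms by (simp add: abs_mult mult_left_mono)
    qed (use assms in simp)
  qed
  finally show ?thesis
    by (simp add: sum_distrib_right)
qed

lemma partial_sum_functional_eq_error:
  fixes F :: "real fps"
  assumes F: "F * (F oo recip_succ_fps) = 1 + fps_X"
  obtains K where "K \<ge> 0" and "\<And>x. 0 \<le> x \<Longrightarrow> x \<le> 1 \<Longrightarrow>
    \<bar>fps_partial_sum F M x * fps_partial_sum F M (x / (1 + x)) - (1 + x)\<bar> \<le> K * x ^ (M + 1)"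
proof -
  define p where "p = (\<Sum>j\<le>M. monom (F $ j) j)"
  define q where "q = (\<Sum>j\<le>M. monom (F $ j) j * [:1, 1:] ^ (M - j))"
  define r where "r = p * q - [:1, 1:] ^ (M + 1)"
  have r_low: "coeff r i = 0" if "i \<le> M" for i
    using partial_sum_product_low_coeffs[OF F that] by (simp add: r_def p_def q_def)
  have "\<bar>fps_partial_sum F M x * fps_partial_sum F M (x / (1 + x)) - (1 + x)\<bar>
      \<le> (\<Sum>i\<le>degree r. \<bar>coeff r i\<bar>) * x ^ (M + 1)" if x: "0 \<le> x" "x \<le> 1" for x
  proof -
    have "poly p x = fps_partial_sum F M x"
      unfolding p_def fps_partial_sum_def by (simp add: poly_sum poly_monom)
    then have "poly r x
        = (1 + x) ^ M * (fps_partial_sum F M x * fps_partial_sum F M (x / (1 + x)) - (1 + x))"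
      unfolding r_def q_def using x by (simp add: poly_partial_sum_reflected algebra_simps)
    then have "\<bar>poly r x\<bar>
        = (1 + x) ^ M * \<bar>fps_partial_sum F M x * fps_partial_sum F M (x / (1 + x)) - (1 + x)\<bar>"
      using x by (simp add: abs_mult)
    then have "\<bar>fps_partial_sum F M x * fps_partial_sum F M (x / (1 + x)) - (1 + x)\<bar>
        = \<bar>poly r x\<bar> / (1 + x) ^ M"
      using x by (simp add: eq_divide_eq)
    also have "\<dots> \<le> \<bar>poly r x\<bar>"
      using x by (simp add: divide_le_eq one_le_power mult_le_cancel_left1)
    also have "\<dots> \<le> (\<Sum>i\<le>degree r. \<bar>coeff r i\<bar>) * x ^ (M + 1)"
      using r_low x by (rule abs_poly_le_if_low_coeffs_zero)
    finally show ?thesis .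
  qed
  then show ?thesis
    by (rule that[rotated]) (auto intro: sum_nonneg)
qed

lemma fps_partial_sum_tendsto: "(\<lambda>n. fps_partial_sum F M (1 / real n)) \<longlonglongrightarrow> F $ 0"
proof -
  have "(\<lambda>n. fps_partial_sum F M (1 / real n)) \<longlonglongrightarrow> (\<Sum>p\<le>M. F $ p * 0 ^ p)"
    unfolding fps_partial_sum_def by (intro tendsto_intros lim_1_over_n)
  also have "(\<Sum>p\<le>M. F $ p * (0::real) ^ p) = F $ 0"
    by (simp add: power_0_left sum.atMost_shift)
  finally show ?thesis .
qed

lemma abs_fps_partial_sum_le:
  fixes F :: "real fps"
  assumes "0 \<le> x" "x \<le> 1"
  shows "\<bar>fps_partial_sum F M x\<bar> \<le> (\<Sum>p\<le>M. \<bar>F $ p\<bar>)"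
  unfolding fps_partial_sum_def using assms
  by (intro order.trans[OF sum_abs] sum_mono) (auto simp: abs_mult power_le_one mult_left_le)

lemma eventually_fps_partial_sum_gt:
  fixes F :: "real fps"
  assumes "c < F $ 0"
  shows "eventually (\<lambda>n. c < fps_partial_sum F M (1 / real n)) sequentially"
  using order_tendstoD(1)[OF fps_partial_sum_tendsto assms] .

section \<open>Ratios of volumes of unit balls\<close>

lemma Omega_pos: "Omega k > 0"
  unfolding Omega_def by (intro divide_pos_pos Gamma_real_pos) auto

lemma Omega_add_two: "Omega (k + 2) = Omega k * (2 * pi / real (k + 2))"
proof -
  have half: "real (k + 2) / 2 = real k / 2 + 1"
    by simp
  have Gamma: "Gamma (real k / 2 + 1 + 1) = (real k / 2 + 1) * Gamma (real k / 2 + 1)"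
    by (rule Gamma_plus1) (auto simp: nonpos_Ints_def)
  have pi: "pi powr (real k / 2 + 1) = pi powr (real k / 2) * pi"
    by (simp add: powr_add)
  have "Gamma (real k / 2 + 1) > 0"
    by (intro Gamma_real_pos) auto
  then show ?thesis
    unfolding Omega_def half Gamma pi by (simp add: field_simps)
qed

lemma Gamma_midpoint_square_le:
  fixes a b :: real
  assumes "a > 0" "b > 0"
  shows "Gamma ((a + b) / 2) ^ 2 \<le> Gamma a * Gamma b"
proof -
  have "(ln \<circ> Gamma) ((1 - 1/2) *\<^sub>R a + (1/2) *\<^sub>R b)
      \<le> (1 - 1/2) * (ln \<circ> Gamma) a + (1/2) * (ln \<circ> Gamma) b"
    by (rule convex_onD[OF log_convex_Gamma_real]) (use assms in auto)
  then have "ln (Gamma ((a + b) / 2)) \<le> (ln (Gamma a) + ln (Gamma b)) / 2"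
    by (simp add: field_simps)
  moreover have pos: "Gamma a > 0" "Gamma b > 0" "Gamma ((a + b) / 2) > 0"
    using assms by auto
  ultimately have "ln (Gamma ((a + b) / 2) ^ 2) \<le> ln (Gamma a * Gamma b)"
    by (simp add: ln_mult ln_realpow)
  then show ?thesis
    using pos by simp
qed

lemma Omega_log_concave: "Omega k * Omega (k + 2) \<le> Omega (k + 1) ^ 2"
proof -
  let ?x = "real k / 2 + 1"
  let ?p = "pi powr (real (k + 1) / 2)"
  have shifts: "real (k + 2) / 2 + 1 = ?x + 1" "real (k + 1) / 2 + 1 = ?x + 1/2"
    by (simp_all add: field_simps)
  have mid: "(?x + (?x + 1)) / 2 = ?x + 1/2"
    by (simp add: field_simps)
  have "Gamma ((?x + (?x + 1)) / 2) ^ 2 \<le> Gamma ?x * Gamma (?x + 1)"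
    by (rule Gamma_midpoint_square_le) auto
  then have Gamma: "Gamma (?x + 1/2) ^ 2 \<le> Gamma ?x * Gamma (?x + 1)"
    by (simp only: mid)
  have pos: "Gamma ?x > 0" "Gamma (?x + 1) > 0" "Gamma (?x + 1/2) > 0"
    by (auto intro!: Gamma_real_pos)
  have "real k / 2 + real (k + 2) / 2 = real (k + 1) / 2 + real (k + 1) / 2"
    by (simp add: field_simps)
  then have powers: "pi powr (real k / 2) * pi powr (real (k + 2) / 2) = ?p ^ 2"
    unfolding power2_eq_square by (simp only: powr_add[symmetric])
  have "Omega k * Omega (k + 2) = ?p ^ 2 / (Gamma ?x * Gamma (?x + 1))"
    unfolding Omega_def shifts(1) powers[symmetric] by simp
  also have "\<dots> \<le> ?p ^ 2 / Gamma (?x + 1/2) ^ 2"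
    using pos by (intro divide_left_mono[OF Gamma] mult_pos_pos zero_less_power) auto
  also have "\<dots> = Omega (k + 1) ^ 2"
    unfolding Omega_def shifts(2) by (simp add: power_divide)
  finally show ?thesis .
qed

definition ball_ratio :: "nat \<Rightarrow> real" where
  "ball_ratio n = Omega (n - 1) / Omega n"

lemma ball_ratio_pos: "ball_ratio n > 0"
  unfolding ball_ratio_def using Omega_pos by simp

lemma ball_ratio_mult_Suc:
  assumes "n \<ge> 1"
  shows "ball_ratio n * ball_ratio (Suc n) = real (Suc n) / (2 * pi)"
proof -
  obtain k where k: "n = k + 1"
    using assms by (metis add.commute le_Suc_ex)
  have "ball_ratio n * ball_ratio (Suc n) = Omega k / Omega (k + 2)"
    unfolding ball_ratio_def k using Omega_pos[of "k + 1"] by (simp add: numeral_2_eq_2)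
  also have "\<dots> = real (Suc n) / (2 * pi)"
    unfolding Omega_add_two k using Omega_pos[of k] by (simp add: field_simps)
  finally show ?thesis .
qed

lemma ball_ratio_mono:
  assumes "n \<ge> 1"
  shows "ball_ratio n \<le> ball_ratio (Suc n)"
proof -
  obtain k where k: "n = k + 1"
    using assms by (metis add.commute le_Suc_ex)
  have "Omega k * Omega (k + 2) \<le> Omega (k + 1) * Omega (k + 1)"
    using Omega_log_concave[of k] by (simp add: power2_eq_square)
  then show ?thesis
    unfolding ball_ratio_def k using Omega_pos[of "k + 1"] Omega_pos[of "k + 2"]
    by (simp add: divide_le_eq le_divide_eq field_simps numeral_2_eq_2)
qed

lemma ball_ratio_square_bounds:
  assumes "n \<ge> 2"
  shows "real n / (2 * pi) \<le> ball_ratio n ^ 2" and "ball_ratio n ^ 2 \<le> real (Suc n) / (2 * pi)"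
proof -
  have "ball_ratio (n - 1) * ball_ratio n \<le> ball_ratio n ^ 2"
    using ball_ratio_mono[of "n - 1"] ball_ratio_pos[of n] assms by (simp add: power2_eq_square)
  moreover have "ball_ratio (n - 1) * ball_ratio n = real n / (2 * pi)"
    using ball_ratio_mult_Suc[of "n - 1"] assms by simp
  ultimately show "real n / (2 * pi) \<le> ball_ratio n ^ 2"
    by simp
  have "ball_ratio n ^ 2 \<le> ball_ratio n * ball_ratio (Suc n)"
    using ball_ratio_mono[of n] ball_ratio_pos[of n] assms by (simp add: power2_eq_square)
  then show "ball_ratio n ^ 2 \<le> real (Suc n) / (2 * pi)"
    using ball_ratio_mult_Suc[of n] assms by simp
qed

lemma ball_ratio_square_asymp: "(\<lambda>n. ball_ratio n ^ 2 / (real n / (2 * pi))) \<longlonglongrightarrow> 1"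
proof (rule tendsto_sandwich[of "\<lambda>n. 1" _ _ "\<lambda>n. 1 + 1 / real n"])
  show "\<forall>\<^sub>F n in sequentially. 1 \<le> ball_ratio n ^ 2 / (real n / (2 * pi))"
    using eventually_ge_at_top[of 2]
    by eventually_elim (use ball_ratio_square_bounds(1) in \<open>auto simp: field_simps\<close>)
  show "\<forall>\<^sub>F n in sequentially. ball_ratio n ^ 2 / (real n / (2 * pi)) \<le> 1 + 1 / real n"
    using eventually_ge_at_top[of 2]
    by eventually_elim (use ball_ratio_square_bounds(2) in \<open>auto simp: field_simps\<close>)
  show "(\<lambda>n. 1 + 1 / real n) \<longlonglongrightarrow> 1"
    using tendsto_add[OF tendsto_const lim_1_over_n, of 1] by simp
qed simp

section \<open>Elementary estimates\<close>

lemma sum_inverse_consecutive_products: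
  fixes a :: real
  assumes "a > 0"
  shows "(\<Sum>i<k. 1 / ((a + real i) * (a + real i + 1))) = 1 / a - 1 / (a + real k)"
proof (induction k)
  case (Suc k)
  have "1 / ((a + real k) * (a + real k + 1)) = 1 / (a + real k) - 1 / (a + real (Suc k))"
    using assms by (simp add: field_simps)
  then show ?case
    using Suc by simp
qed simp

lemma inverse_power_le_inverse_consecutive_product:
  fixes a :: real
  assumes "a \<ge> 2" and "m \<ge> 2"
  shows "1 / (a + 2 * real i) ^ m \<le> 1 / a ^ (m - 2) * (1 / ((a - 1 + real i) * (a - 1 + real i + 1)))"
proof -
  have "a ^ (m - 2) \<le> (a + 2 * real i) ^ (m - 2)"
    using assms by (intro power_mono) auto
  moreover have "(a - 1 + real i) * (a - 1 + real i + 1) \<le> (a + 2 * real i) ^ 2"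
    using assms by (simp add: power2_eq_square algebra_simps)
  moreover have pos: "0 < (a - 1 + real i) * (a - 1 + real i + 1)"
    using assms by simp
  ultimately have "a ^ (m - 2) * ((a - 1 + real i) * (a - 1 + real i + 1))
      \<le> (a + 2 * real i) ^ (m - 2) * (a + 2 * real i) ^ 2"
    using assms by (intro mult_mono) auto
  also have "\<dots> = (a + 2 * real i) ^ m"
    using assms by (metis le_add_diff_inverse2 power_add)
  finally show ?thesis
    using assms pos by (simp add: divide_simps)
qed

lemma sum_inverse_power_even_steps_le:
  assumes "n \<ge> 2" and "m \<ge> 2"
  shows "(\<Sum>i<k. 1 / real (n + 2 * i) ^ m) \<le> 2 / real n ^ (m - 1)"
proof -
  let ?a = "real n"
  have "(\<Sum>i<k. 1 / real (n + 2 * i) ^ m)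
      \<le> (\<Sum>i<k. 1 / ?a ^ (m - 2) * (1 / ((?a - 1 + real i) * (?a - 1 + real i + 1))))"
    using inverse_power_le_inverse_consecutive_product[of ?a m] assms by (intro sum_mono) simp
  also have "\<dots> = 1 / ?a ^ (m - 2) * (\<Sum>i<k. 1 / ((?a - 1 + real i) * (?a - 1 + real i + 1)))"
    by (simp only: sum_distrib_left)
  also have "\<dots> = 1 / ?a ^ (m - 2) * (1 / (?a - 1) - 1 / (?a - 1 + real k))"
    by (subst sum_inverse_consecutive_products) (use assms in auto)
  also have "\<dots> \<le> 1 / ?a ^ (m - 2) * (2 / ?a)"
  proof (rule mult_left_mono)
    have "1 / (?a - 1) - 1 / (?a - 1 + real k) \<le> 1 / (?a - 1)"
      using assms by simp
    also have "\<dots> \<le> 2 / ?a"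
      using assms by (simp add: field_simps)
    finally show "1 / (?a - 1) - 1 / (?a - 1 + real k) \<le> 2 / ?a" .
  qed simp
  also have "\<dots> = 2 / ?a ^ (m - 1)"
  proof -
    have "m - 1 = Suc (m - 2)"
      using assms by simp
    then have "?a ^ (m - 1) = ?a * ?a ^ (m - 2)"
      by (simp only: power_Suc)
    then show ?thesis
      by simp
  qed
  finally show ?thesis .
qed

lemma decay_from_pair_sums:
  fixes f :: "nat \<Rightarrow> real"
  assumes "f \<longlonglongrightarrow> 0" and "n0 \<ge> 2" and "K \<ge> 0" and "m \<ge> 2"
    and pair: "\<And>n. n \<ge> n0 \<Longrightarrow> \<bar>f n + f (Suc n)\<bar> \<le> K / real n ^ m"
    and "n \<ge> n0"
  shows "\<bar>f n\<bar> \<le> 4 * K / real n ^ (m - 1)"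
proof -
  have two_steps: "\<bar>f j - f (j + 2)\<bar> \<le> 2 * K / real j ^ m" if "j \<ge> n0" for j
  proof -
    have "\<bar>f (Suc j) + f (Suc (Suc j))\<bar> \<le> K / real (Suc j) ^ m"
      using pair[of "Suc j"] that by simp
    also have "\<dots> \<le> K / real j ^ m"
      using assms that by (intro divide_left_mono power_mono) auto
    finally show ?thesis
      using pair[OF that] by (simp add: numeral_2_eq_2 abs_le_iff)
  qed
  have telescope: "\<bar>f n - f (n + 2 * k)\<bar> \<le> 2 * K * (\<Sum>i<k. 1 / real (n + 2 * i) ^ m)" for k
  proof (induction k)
    case (Suc k)
    have "\<bar>f (n + 2 * k) - f (n + 2 * k + 2)\<bar> \<le> 2 * K / real (n + 2 * k) ^ m"
      using two_steps[of "n + 2 * k"] \<open>n \<ge> n0\<close> by simp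
    then show ?case
      using Suc.IH by (simp add: algebra_simps del: of_nat_add)
  qed simp
  have bound: "\<bar>f n\<bar> \<le> \<bar>f (n + 2 * k)\<bar> + 4 * K / real n ^ (m - 1)" for k
    using telescope[of k] sum_inverse_power_even_steps_le[of n m k] assms
      mult_left_mono[of _ _ "2 * K"] by fastforce
  have "(\<lambda>k. f (n + 2 * k)) \<longlonglongrightarrow> 0"
    using LIMSEQ_subseq_LIMSEQ[OF assms(1), of "\<lambda>k. n + 2 * k"] by (simp add: strict_mono_def o_def)
  then have "(\<lambda>k. \<bar>f (n + 2 * k)\<bar> + 4 * K / real n ^ (m - 1)) \<longlonglongrightarrow> 0 + 4 * K / real n ^ (m - 1)"
    by (intro tendsto_add tendsto_const tendsto_rabs_zero)
  then show ?thesis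
    using bound by (intro LIMSEQ_le_const) auto
qed

lemma abs_ln_one_plus_le:
  fixes u :: real
  assumes "\<bar>u\<bar> \<le> 1/2"
  shows "\<bar>ln (1 + u)\<bar> \<le> 2 * \<bar>u\<bar>"
proof -
  have "\<bar>ln (1 + u) - u\<bar> \<le> 2 * u\<^sup>2"
    using assms by (rule abs_ln_one_plus_x_minus_x_bound)
  moreover have "2 * u\<^sup>2 \<le> \<bar>u\<bar>"
    using assms mult_right_mono[of "2 * \<bar>u\<bar>" 1 "\<bar>u\<bar>"] by (simp add: power2_eq_square)
  ultimately show ?thesis
    by linarith
qed

lemma abs_ln_divide_le:
  fixes a d e :: real
  assumes "a \<ge> 1" and "\<bar>d - a\<bar> \<le> e" and "e \<le> 1/2"
  shows "\<bar>ln (d / a)\<bar> \<le> 2 * e"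
proof -
  define u where "u = d / a - 1"
  have "\<bar>u\<bar> = \<bar>d - a\<bar> / a"
    using assms unfolding u_def by (simp add: field_simps)
  also have "\<dots> \<le> \<bar>d - a\<bar>"
    using assms by (simp add: divide_le_eq mult_le_cancel_left1)
  finally have "\<bar>u\<bar> \<le> e"
    using assms by linarith
  then have "\<bar>ln (1 + u)\<bar> \<le> 2 * \<bar>u\<bar>"
    using assms by (intro abs_ln_one_plus_le) auto
  then show ?thesis
    using \<open>\<bar>u\<bar> \<le> e\<close> unfolding u_def by simp
qed

lemma abs_exp_minus_one_le:
  fixes z :: real
  assumes "\<bar>z\<bar> \<le> 1/2"
  shows "\<bar>exp z - 1\<bar> \<le> 2 * \<bar>z\<bar>"
proof -
  have "exp z \<le> 1 + 2 * \<bar>z\<bar>"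
    using exp_bound_lemma[of z] assms by simp
  moreover have "1 + z \<le> exp z"
    by simp
  ultimately show ?thesis
    using abs_ge_minus_self[of z] unfolding abs_le_iff by linarith
qed

section \<open>The asymptotic expansion\<close>

definition ball_ratio_approx :: "nat \<Rightarrow> nat \<Rightarrow> real" where
  "ball_ratio_approx M n = real n / (2 * pi) * fps_partial_sum sigma_fps M (1 / real n)"

lemma ball_ratio_approx_expansion:
  assumes "n > 0"
  shows "ball_ratio_approx (N + 2) n = (real n + 1/2) / (2 * pi)
           + (\<Sum>j = 1..N. ss j / real n ^ j) + ss (Suc N) / real n ^ Suc N"
proof -
  define h where "h j = ss j / real n ^ j" for j
  have summand: "real n / (2 * pi) * (sigma_fps $ Suc j * (1 / real n) ^ Suc j) = h j" for j
    using assms unfolding h_def ss_conv_sigma_fps by (simp add: field_simps)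
  have "N + 2 = Suc (N + 1)"
    by simp
  then have "ball_ratio_approx (N + 2) n
      = real n / (2 * pi) * (sigma_fps $ 0 * (1 / real n) ^ 0
          + (\<Sum>j\<le>N + 1. sigma_fps $ Suc j * (1 / real n) ^ Suc j))"
    unfolding ball_ratio_approx_def fps_partial_sum_def by (simp only: sum.atMost_Suc_shift)
  also have "\<dots> = real n / (2 * pi) + (\<Sum>j\<le>N + 1. h j)"
    by (simp only: distrib_left sum_distrib_left summand sigma_fps_nth_0 power_0 mult_1_right)
  also have "(\<Sum>j\<le>N + 1. h j) = h 0 + (\<Sum>j = 1..N. h j) + h (Suc N)"
    by (simp add: atMost_atLeast0 sum.atLeast_Suc_atMost)
  also have "h 0 = 1 / (4 * pi)"
    unfolding h_def ss_conv_sigma_fps One_nat_def[symmetric] sigma_fps_nth_1 by simp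
  finally show ?thesis
    unfolding h_def by (simp add: field_simps)
qed

definition log_error :: "nat \<Rightarrow> nat \<Rightarrow> real" where
  "log_error M n = ln (ball_ratio n ^ 2 / ball_ratio_approx M n)"

lemma log_error_tendsto_zero: "log_error M \<longlonglongrightarrow> 0"
proof -
  have "(\<lambda>n. ln (ball_ratio n ^ 2 / (real n / (2 * pi)) / fps_partial_sum sigma_fps M (1 / real n)))
      \<longlonglongrightarrow> ln (1 / 1)"
    using ball_ratio_square_asymp fps_partial_sum_tendsto[of sigma_fps M]
    by (intro tendsto_ln tendsto_divide) (auto simp: sigma_fps_nth_0)
  then show ?thesis
    unfolding log_error_def[abs_def] ball_ratio_approx_def by (simp add: divide_divide_eq_left)
qed

lemma log_error_pair_sum_eq:
  fixes M n :: nat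
  defines "S \<equiv> \<lambda>x. fps_partial_sum sigma_fps M x"
  assumes "n \<ge> 1" and S_pos: "S (1 / real n) > 0" "S (1 / real (Suc n)) > 0"
  shows "log_error M n + log_error M (Suc n)
           = - ln (S (1 / real n) * S (1 / real (Suc n)) / (1 + 1 / real n))"
proof -
  have approx_pos: "ball_ratio_approx M n > 0" "ball_ratio_approx M (Suc n) > 0"
    using \<open>n \<ge> 1\<close> S_pos unfolding ball_ratio_approx_def S_def by auto
  have cancel: "(s / c) ^ 2 / (m / c * a * (s / c * b)) = s / m / (a * b)"
    if "s > 0" "c > 0" "m > 0" "a > 0" "b > 0" for s c m a b :: real
    using that by (simp add: field_simps power2_eq_square)
  have "ball_ratio n ^ 2 * ball_ratio (Suc n) ^ 2 = (real (Suc n) / (2 * pi)) ^ 2"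
    using ball_ratio_mult_Suc[OF \<open>n \<ge> 1\<close>] by (simp flip: power_mult_distrib)
  then have "ball_ratio n ^ 2 / ball_ratio_approx M n * (ball_ratio (Suc n) ^ 2 / ball_ratio_approx M (Suc n))
      = (real (Suc n) / (2 * pi)) ^ 2 / (ball_ratio_approx M n * ball_ratio_approx M (Suc n))"
    by (simp only: times_divide_times_eq)
  also have "\<dots> = real (Suc n) / real n / (S (1 / real n) * S (1 / real (Suc n)))"
    unfolding ball_ratio_approx_def S_def by (rule cancel) (use S_pos \<open>n \<ge> 1\<close> in \<open>auto simp: S_def\<close>)
  also have "real (Suc n) / real n = 1 + 1 / real n"
    using \<open>n \<ge> 1\<close> by (simp add: field_simps)
  finally have ratio: "ball_ratio n ^ 2 / ball_ratio_approx M n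
        * (ball_ratio (Suc n) ^ 2 / ball_ratio_approx M (Suc n))
      = (1 + 1 / real n) / (S (1 / real n) * S (1 / real (Suc n)))" .
  have "log_error M n + log_error M (Suc n)
      = ln (ball_ratio n ^ 2 / ball_ratio_approx M n
          * (ball_ratio (Suc n) ^ 2 / ball_ratio_approx M (Suc n)))"
    unfolding log_error_def
    by (rule ln_mult_pos[symmetric])
      (use approx_pos ball_ratio_pos[of n] ball_ratio_pos[of "Suc n"] in auto)
  then show ?thesis
    unfolding ratio
    using S_pos \<open>n \<ge> 1\<close> by (simp add: ln_div)
qed

lemma log_error_pair_sum_bound:
  obtains K n0 where "K \<ge> 0" and "n0 \<ge> 2"
    and "\<And>n. n \<ge> n0 \<Longrightarrow> \<bar>log_error M n + log_error M (Suc n)\<bar> \<le> K / real n ^ (M + 1)"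
proof -
  let ?S = "fps_partial_sum sigma_fps M"
  obtain K where "K \<ge> 0"
    and K: "\<And>x. 0 \<le> x \<Longrightarrow> x \<le> 1 \<Longrightarrow> \<bar>?S x * ?S (x / (1 + x)) - (1 + x)\<bar> \<le> K * x ^ (M + 1)"
    using partial_sum_functional_eq_error[OF sigma_fps_functional_eq] by blast
  obtain n1 where n1: "\<And>n. n \<ge> n1 \<Longrightarrow> 1/2 < ?S (1 / real n)"
    using eventually_fps_partial_sum_gt[of "1/2" sigma_fps M] sigma_fps_nth_0
    unfolding eventually_sequentially by auto
  define n0 where "n0 = max (max n1 2) (nat \<lceil>2 * K\<rceil>)"
  have "\<bar>log_error M n + log_error M (Suc n)\<bar> \<le> 2 * K / real n ^ (M + 1)" if "n \<ge> n0" for n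
  proof -
    have n: "n \<ge> n1" "real n \<ge> 2" "real n \<ge> 2 * K"
      using that unfolding n0_def by linarith+
    define x where "x = 1 / real n"
    have x: "0 < x" "x \<le> 1/2" "K * x \<le> 1/2"
      using n \<open>K \<ge> 0\<close> unfolding x_def by (auto simp: field_simps)
    have succ: "1 / real (Suc n) = x / (1 + x)"
      using n unfolding x_def by (simp add: field_simps)
    have "x ^ (M + 1) \<le> x"
      using power_decreasing[of 1 "M + 1" x] x by simp
    then have "K * x ^ (M + 1) \<le> K * x"
      using \<open>K \<ge> 0\<close> by (rule mult_left_mono)
    then have "K * x ^ (M + 1) \<le> 1/2"
      using x by linarith
    then have "\<bar>ln (?S x * ?S (x / (1 + x)) / (1 + x))\<bar> \<le> 2 * (K * x ^ (M + 1))"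
      using x by (intro abs_ln_divide_le K) auto
    moreover have "log_error M n + log_error M (Suc n) = - ln (?S x * ?S (x / (1 + x)) / (1 + x))"
      using log_error_pair_sum_eq[of n M] n n1[of n] n1[of "Suc n"]
      unfolding succ x_def[symmetric] by simp
    ultimately show ?thesis
      unfolding x_def by (simp add: power_divide)
  qed
  then show ?thesis
    using that[of "2 * K" n0] \<open>K \<ge> 0\<close> by (simp add: n0_def)
qed

lemma log_error_decay:
  assumes "M \<ge> 1"
  obtains C n0 where "\<And>n. n \<ge> n0 \<Longrightarrow> \<bar>log_error M n\<bar> \<le> C / real n ^ M"
proof -
  obtain K n0 where "K \<ge> 0" "n0 \<ge> 2"
    and pair: "\<And>n. n \<ge> n0 \<Longrightarrow> \<bar>log_error M n + log_error M (Suc n)\<bar> \<le> K / real n ^ (M + 1)"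
    using log_error_pair_sum_bound by blast
  have "\<bar>log_error M n\<bar> \<le> 4 * K / real n ^ M" if "n \<ge> n0" for n
    using decay_from_pair_sums[OF log_error_tendsto_zero \<open>n0 \<ge> 2\<close> \<open>K \<ge> 0\<close> _ pair that] assms
    by simp
  then show ?thesis
    using that by blast
qed

lemma ball_ratio_square_approx:
  assumes "M \<ge> 1"
  shows "(\<lambda>n. ball_ratio n ^ 2 - ball_ratio_approx M n) \<in> O(\<lambda>n. 1 / real n ^ (M - 1))"
proof -
  define B where "B = (\<Sum>p\<le>M. \<bar>sigma_fps $ p\<bar>)"
  obtain C n0 where C: "\<And>n. n \<ge> n0 \<Longrightarrow> \<bar>log_error M n\<bar> \<le> C / real n ^ M"
    using log_error_decay[OF assms] by blast
  have small: "eventually (\<lambda>n. \<bar>log_error M n\<bar> \<le> 1/2) sequentially"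
    using tendstoD[OF log_error_tendsto_zero[of M], of "1/2"]
    by (auto simp: dist_real_def elim: eventually_mono)
  have pos: "eventually (\<lambda>n. 0 < fps_partial_sum sigma_fps M (1 / real n)) sequentially"
    using eventually_fps_partial_sum_gt[of 0 sigma_fps M] by (simp add: sigma_fps_nth_0)
  have "eventually (\<lambda>n. \<bar>ball_ratio n ^ 2 - ball_ratio_approx M n\<bar> \<le> 2 * C * B * \<bar>1 / real n ^ (M - 1)\<bar>)
          sequentially"
    using eventually_ge_at_top[of "max n0 1"] small pos
  proof eventually_elim
    case (elim n)
    then have n: "n \<ge> n0" "real n \<ge> 1"
      by auto
    have approx_pos: "ball_ratio_approx M n > 0"
      using elim n unfolding ball_ratio_approx_def by simp
    have "ball_ratio_approx M n \<le> real n * B"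
      using abs_fps_partial_sum_le[of "1 / real n" sigma_fps M] n pi_gt3 approx_pos
      unfolding ball_ratio_approx_def B_def
      by (intro mult_mono) (auto simp: field_simps zero_less_mult_iff)
    moreover have "ball_ratio n ^ 2 - ball_ratio_approx M n = ball_ratio_approx M n * (exp (log_error M n) - 1)"
      using approx_pos ball_ratio_pos[of n] unfolding log_error_def by (simp add: algebra_simps)
    ultimately have "\<bar>ball_ratio n ^ 2 - ball_ratio_approx M n\<bar> \<le> real n * B * (2 * \<bar>log_error M n\<bar>)"
      using abs_exp_minus_one_le[OF elim(2)] approx_pos by (simp add: abs_mult mult_mono)
    also have "\<dots> \<le> real n * B * (2 * (C / real n ^ M))"
      using C[OF n(1)] n by (intro mult_left_mono) (auto simp: B_def)
    also have "\<dots> = 2 * C * B * \<bar>1 / real n ^ (M - 1)\<bar>"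
    proof -
      have "real n ^ M = real n * real n ^ (M - 1)"
        using assms by (cases M) auto
      then show ?thesis
        using n by (simp add: field_simps)
    qed
    finally show ?case .
  qed
  then show ?thesis
    by (intro bigoI) simp
qed

theorem theorem10:
  fixes N :: nat
  shows "(\<lambda>n::nat. (Omega (n - 1) / Omega n) ^ 2 - (real n + 1/2) / (2 * pi)
            - (\<Sum>j = 1..N. ss j / real n ^ j))
         \<in> O(\<lambda>n::nat. 1 / real n ^ (N + 1))"
proof -
  have expansion: "eventually (\<lambda>n. (Omega (n - 1) / Omega n) ^ 2 - (real n + 1/2) / (2 * pi)
            - (\<Sum>j = 1..N. ss j / real n ^ j)
          = (ball_ratio n ^ 2 - ball_ratio_approx (N + 2) n) + ss (Suc N) * (1 / real n ^ (N + 1)))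
          sequentially"
    using eventually_gt_at_top[of 0]
  proof eventually_elim
    case (elim n)
    show ?case
      using ball_ratio_approx_expansion[OF elim, of N] by (simp add: ball_ratio_def)
  qed
  have "(\<lambda>n. ball_ratio n ^ 2 - ball_ratio_approx (N + 2) n) \<in> O(\<lambda>n. 1 / real n ^ (N + 1))"
    using ball_ratio_square_approx[of "N + 2"] by simp
  moreover have "(\<lambda>n. ss (Suc N) * (1 / real n ^ (N + 1))) \<in> O(\<lambda>n. 1 / real n ^ (N + 1))"
    by (simp only: cmult_in_bigo_iff landau_o.big_refl simp_thms)
  ultimately have "(\<lambda>n. (ball_ratio n ^ 2 - ball_ratio_approx (N + 2) n) + ss (Suc N) * (1 / real n ^ (N + 1)))
      \<in> O(\<lambda>n. 1 / real n ^ (N + 1))"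
    by (rule sum_in_bigo(1))
  then show ?thesis
    by (rule landau_o.big.in_cong[OF expansion, THEN iffD2])
qed

end
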